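(* Let $\mathfrak A$ be an $L$-structure and $a,b,c,d\in A$. (1) Let $t(x,y)$ be a c-term. If $t^{\mathfrak A}(a,b)=t^{\mathfrak A}(c,d)$ and $t^{\mathfrak A}(a,b)\neq t^{\mathfrak A}(c,d')$ for all $d'\in A$ with $d'\neq d$, then $\mathfrak A\models a\to b:\cdot\, c\to d$. (2) Let $t_a,t_b,t_c,t_d$ be c-terms such that $t_a^{\mathfrak A}(a,b)=t_a^{\mathfrak A}(c,d)$ and $t_a^{\mathfrak A}(a',b)\neq t_a^{\mathfrak A}(c,d)$ for all $a'\neq a$; $t_b^{\mathfrak A}(a,b)=t_b^{\mathfrak A}(c,d)$ and $t_b^{\mathfrak A}(a,b')\neq t_b^{\mathfrak A}(c,d)$ for all $b'\neq b$; $t_c^{\mathfrak A}(a,b)=t_c^{\mathfrak A}(c,d)$ and $t_c^{\mathfrak A}(a,b)\neq t_c^{\mathfrak A}(c',d)$ for all $c'\neq c$; $t_d^{\mathfrak A}(a,b)=t_d^{\mathfrak A}(c,d)$ and $t_d^{\mathfrak A}(a,b)\neq t_d^{\mathfrak A}(c,d')$ for all $d'\neq d$. Then $\mathfrak A\models a:b::c:d$.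
   Context: A c-term is an $L$-term containing both variables $x$ and $y$ (and no others); $t^{\mathfrak A}$ is the induced term function. A c-formula is a conjunctive $L$-formula (built from atomic formulas using only $\wedge,\exists,\forall$) with free variables exactly $x,y$ whose dependency graph (vertices: its variables; edge $\{w,z\}$ iff $w,z$ occur together in an atomic subformula) is connected; elements of $A$ may be used as parameters (e.g. the formula $t(x,y)=t^{\mathfrak A}(a,b)$ counts as a c-formula). $\uparrow_{\mathfrak A}(a\to b)=\{\alpha\text{ c-formula}:\mathfrak A\models\alpha(a,b)\}$; $\uparrow_{\mathfrak A}(a\to b:\cdot\, c\to d)=\uparrow_{\mathfrak A}(a\to b)\cap\uparrow_{\mathfrak A}(c\to d)$. A c-formula is trivial in $\mathfrak A$ iff it lies in $\uparrow_{\mathfrak A}(a\to b:\cdot\, c\to d)$ for all $a,b,c,d\in A$; $\emptyset_{\mathfrak A}$ is the set of these. $\mathfrak A\models a\to b:\cdot\, c\to d$ iff either $\uparrow_{\mathfrak A}(a\to b)\cup\uparrow_{\mathfrak A}(c\to d)$ consists only of trivial formulas, or $\uparrow_{\mathfrak A}(a\to b:\cdot\, c\to d)$ contains a non-trivial formula and for every $d'\in A$, $\emptyset_{\mathfrak A}\subsetneq\uparrow(a\to b:\cdot\, c\to d)\subseteq\uparrow(a\to b:\cdot\, c\to d')$ implies $\emptyset_{\mathfrak A}\subsetneq\uparrow(a\to b:\cdot\, c\to d')\subseteq\uparrow(a\to b:\cdot\, c\to d)$. $\mathfrak A\models a:b::c:d$ iff $\mathfrak A\models a\to b:\cdot\,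 c\to d$, $b\to a:\cdot\, d\to c$, $c\to d:\cdot\, a\to b$ and $d\to c:\cdot\, b\to a$. *)

theory Defs
  imports Main
begin

text \<open>An L-structure has universe the type 'a (nonempty by HOL
  semantics) and interprets symbols. Variables are natural numbers; x = 0, y = 1.
  Terms may contain parameters (elements of A); L-terms proper have none.\<close>

record ('f, 'r) lang =
  fun_ar :: "'f \<Rightarrow> nat"
  rel_ar :: "'r \<Rightarrow> nat"

record ('f, 'r, 'a) struc =
  fun_int :: "'f \<Rightarrow> 'a list \<Rightarrow> 'a"
  rel_int :: "'r \<Rightarrow> 'a list \<Rightarrow> bool"

datatype ('f, 'a) trm = Var nat | Par 'a | Fn 'f "('f, 'a) trm list"

datatype ('f, 'r, 'a) fm =
    Eq "('f, 'a) trm" "('f, 'a) trm"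
  | Rel 'r "('f, 'a) trm list"
  | Conj "('f, 'r, 'a) fm" "('f, 'r, 'a) fm"
  | Ex nat "('f, 'r, 'a) fm"
  | All nat "('f, 'r, 'a) fm"

fun teval :: "('f, 'r, 'a) struc \<Rightarrow> (nat \<Rightarrow> 'a) \<Rightarrow> ('f, 'a) trm \<Rightarrow> 'a" where
  "teval M e (Var v) = e v"
| "teval M e (Par p) = p"
| "teval M e (Fn f ts) = fun_int M f (map (teval M e) ts)"

fun wf_trm :: "('f, 'r) lang \<Rightarrow> ('f, 'a) trm \<Rightarrow> bool" where
  "wf_trm L (Var v) = True"
| "wf_trm L (Par p) = True"
| "wf_trm L (Fn f ts) = (length ts = fun_ar L f \<and> (\<forall>t\<in>set ts. wf_trm L t))"

fun tvars :: "('f, 'a) trm \<Rightarrow> nat set" where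
  "tvars (Var v) = {v}"
| "tvars (Par p) = {}"
| "tvars (Fn f ts) = (\<Union>t\<in>set ts. tvars t)"

fun has_par :: "('f, 'a) trm \<Rightarrow> bool" where
  "has_par (Var v) = False"
| "has_par (Par p) = True"
| "has_par (Fn f ts) = (\<exists>t\<in>set ts. has_par t)"

fun sat :: "('f, 'r, 'a) struc \<Rightarrow> (nat \<Rightarrow> 'a) \<Rightarrow> ('f, 'r, 'a) fm \<Rightarrow> bool" where
  "sat M e (Eq s t) = (teval M e s = teval M e t)"
| "sat M e (Rel r ts) = rel_int M r (map (teval M e) ts)"
| "sat M e (Conj \<phi> \<psi>) = (sat M e \<phi> \<and> sat M e \<psi>)"
| "sat M e (Ex v \<phi>) = (\<exists>z. sat M (e(v := z)) \<phi>)"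
| "sat M e (All v \<phi>) = (\<forall>z. sat M (e(v := z)) \<phi>)"

fun wf_fm :: "('f, 'r) lang \<Rightarrow> ('f, 'r, 'a) fm \<Rightarrow> bool" where
  "wf_fm L (Eq s t) = (wf_trm L s \<and> wf_trm L t)"
| "wf_fm L (Rel r ts) = (length ts = rel_ar L r \<and> (\<forall>t\<in>set ts. wf_trm L t))"
| "wf_fm L (Conj \<phi> \<psi>) = (wf_fm L \<phi> \<and> wf_fm L \<psi>)"
| "wf_fm L (Ex v \<phi>) = wf_fm L \<phi>"
| "wf_fm L (All v \<phi>) = wf_fm L \<phi>"

fun fv :: "('f, 'r, 'a) fm \<Rightarrow> nat set" where
  "fv (Eq s t) = tvars s \<union> tvars t"
| "fv (Rel r ts) = (\<Union>t\<in>set ts. tvars t)"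
| "fv (Conj \<phi> \<psi>) = fv \<phi> \<union> fv \<psi>"
| "fv (Ex v \<phi>) = fv \<phi> - {v}"
| "fv (All v \<phi>) = fv \<phi> - {v}"

fun atom_vars :: "('f, 'r, 'a) fm \<Rightarrow> nat set set" where
  "atom_vars (Eq s t) = {tvars s \<union> tvars t}"
| "atom_vars (Rel r ts) = {\<Union>t\<in>set ts. tvars t}"
| "atom_vars (Conj \<phi> \<psi>) = atom_vars \<phi> \<union> atom_vars \<psi>"
| "atom_vars (Ex v \<phi>) = atom_vars \<phi>"
| "atom_vars (All v \<phi>) = atom_vars \<phi>"

definition dep_vertices :: "('f, 'r, 'a) fm \<Rightarrow> nat set" where
  "dep_vertices \<phi> = \<Union>(atom_vars \<phi>)"

definition dep_edges :: "('f, 'r, 'a) fm \<Rightarrow> (nat \<times> nat) set" where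
  "dep_edges \<phi> = {(w, z). \<exists>S\<in>atom_vars \<phi>. w \<in> S \<and> z \<in> S}"

definition dep_connected :: "('f, 'r, 'a) fm \<Rightarrow> bool" where
  "dep_connected \<phi> =
     (\<forall>u\<in>dep_vertices \<phi>. \<forall>v\<in>dep_vertices \<phi>. (u, v) \<in> (dep_edges \<phi>)\<^sup>*)"

definition vx :: nat where "vx = 0"
definition vy :: nat where "vy = 1"

definition cterm :: "('f, 'r) lang \<Rightarrow> ('f, 'a) trm \<Rightarrow> bool" where
  "cterm L t = (wf_trm L t \<and> \<not> has_par t \<and> tvars t = {vx, vy})"

text \<open>c-formulas: conjunctive formulas (parameters allowed), free variables
  exactly x, y, connected dependency graph.\<close>
definition cformula :: "('f, 'r) lang \<Rightarrow> ('f, 'r, 'a) fm \<Rightarrow> bool" where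
  "cformula L \<phi> = (wf_fm L \<phi> \<and> fv \<phi> = {vx, vy} \<and> dep_connected \<phi>)"

definition asg :: "'a \<Rightarrow> 'a \<Rightarrow> nat \<Rightarrow> 'a" where
  "asg a b = (\<lambda>v. if v = vx then a else b)"

definition tfun :: "('f, 'r, 'a) struc \<Rightarrow> ('f, 'a) trm \<Rightarrow> 'a \<Rightarrow> 'a \<Rightarrow> 'a" where
  "tfun M t a b = teval M (asg a b) t"

definition up :: "('f, 'r) lang \<Rightarrow> ('f, 'r, 'a) struc \<Rightarrow> 'a \<Rightarrow> 'a \<Rightarrow> ('f, 'r, 'a) fm set" where
  "up L M a b = {\<phi>. cformula L \<phi> \<and> sat M (asg a b) \<phi>}"

definition up2 :: "('f, 'r) lang \<Rightarrow> ('f, 'r, 'a) struc \<Rightarrow> 'a \<Rightarrow> 'a \<Rightarrow> 'a \<Rightarrow> 'a \<Rightarrow> ('f, 'r, 'a) fm set" where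
  "up2 L M a b c d = up L M a b \<inter> up L M c d"

definition triv :: "('f, 'r) lang \<Rightarrow> ('f, 'r, 'a) struc \<Rightarrow> ('f, 'r, 'a) fm set" where
  "triv L M = {\<phi>. cformula L \<phi> \<and> (\<forall>a b c d. \<phi> \<in> up2 L M a b c d)}"

definition arrow_models :: "('f, 'r) lang \<Rightarrow> ('f, 'r, 'a) struc \<Rightarrow> 'a \<Rightarrow> 'a \<Rightarrow> 'a \<Rightarrow> 'a \<Rightarrow> bool" where
  "arrow_models L M a b c d =
     (up L M a b \<union> up L M c d \<subseteq> triv L M \<or>
      ((\<exists>\<phi>\<in>up2 L M a b c d. \<phi> \<notin> triv L M) \<and>
       (\<forall>d'. triv L M \<subset> up2 L M a b c d \<and> up2 L M a b c d \<subseteq> up2 L M a b c d'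
              \<longrightarrow> triv L M \<subset> up2 L M a b c d' \<and> up2 L M a b c d' \<subseteq> up2 L M a b c d)))"

definition analogy :: "('f, 'r) lang \<Rightarrow> ('f, 'r, 'a) struc \<Rightarrow> 'a \<Rightarrow> 'a \<Rightarrow> 'a \<Rightarrow> 'a \<Rightarrow> bool" where
  "analogy L M a b c d =
     (arrow_models L M a b c d \<and> arrow_models L M b a d c \<and>
      arrow_models L M c d a b \<and> arrow_models L M d c b a)"

end

theory Submission
  imports Defs
begin

text \<open>A c-term t with t(a,b) = t(c,d) yields the c-formula t(x,y) = t(a,b), which
  holds at both pairs. If this value singles out d among all t(c,d'), the formula
  holds at (a,b) and (c,d') only for d' = d, which is exactly what the maximality
  clause of a \<rightarrow> b :\<cdot> c \<rightarrow> d demands. For the analogy each of the four arrow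
  statements is an instance of this, with the roles of the four elements permuted;
  the two that fix the first coordinate use the term with x and y interchanged.\<close>

fun rename_trm :: "(nat \<Rightarrow> nat) \<Rightarrow> ('f, 'a) trm \<Rightarrow> ('f, 'a) trm" where
  "rename_trm \<rho> (Var v) = Var (\<rho> v)"
| "rename_trm \<rho> (Par p) = Par p"
| "rename_trm \<rho> (Fn f ts) = Fn f (map (rename_trm \<rho>) ts)"

lemma wf_trm_rename_trm [simp]: "wf_trm L (rename_trm \<rho> t) = wf_trm L t"
  by (induction t) auto

lemma has_par_rename_trm [simp]: "has_par (rename_trm \<rho> t) = has_par t"
  by (induction t) auto

lemma tvars_rename_trm [simp]: "tvars (rename_trm \<rho> t) = \<rho> ` tvars t"
  by (induction t) (auto simp: image_UN)

lemma teval_rename_trm: "teval M e (rename_trm \<rho> t) = teval M (e \<circ> \<rho>) t"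
  by (induction t) (auto intro!: arg_cong[where f = "fun_int M _"])

lemma teval_cong: "(\<And>v. v \<in> tvars t \<Longrightarrow> e v = e' v) \<Longrightarrow> teval M e t = teval M e' t"
proof (induction t)
  case (Fn f ts)
  then show ?case by (fastforce intro!: arg_cong[where f = "fun_int M f"])
qed simp_all

definition swap_xy :: "('f, 'a) trm \<Rightarrow> ('f, 'a) trm" where
  "swap_xy = rename_trm (id(vx := vy, vy := vx))"

lemma cterm_swap_xy: "cterm L t \<Longrightarrow> cterm L (swap_xy t)"
  by (auto simp: cterm_def swap_xy_def)

lemma tfun_swap_xy:
  assumes "cterm L t"
  shows "tfun M (swap_xy t) a b = tfun M t b a"
proof -
  have "\<And>v. v \<in> tvars t \<Longrightarrow> (asg a b \<circ> id(vx := vy, vy := vx)) v = asg b a v"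
    using assms by (auto simp: cterm_def asg_def vx_def vy_def)
  then show ?thesis
    unfolding tfun_def swap_xy_def teval_rename_trm by (rule teval_cong)
qed

lemma cformula_Eq_Par:
  assumes "wf_trm L t" and "tvars t = {vx, vy}"
  shows "cformula L (Eq t (Par p))"
  using assms
  by (auto simp: cformula_def dep_connected_def dep_vertices_def dep_edges_def)

lemma arrow_models_if_cformula_determines_last:
  assumes "cformula L \<phi>" and "sat M (asg a b) \<phi>" and "sat M (asg c d) \<phi>"
    and determines: "\<And>d'. sat M (asg c d') \<phi> \<Longrightarrow> d' = d"
  shows "arrow_models L M a b c d"
proof (cases "\<exists>z. z \<noteq> d")
  case False
  \<comment> \<open>On a one-element universe every c-formula is trivial.\<close>
  then have "\<And>u v. asg u v = asg d d"
    by (metis ext)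
  then have "\<And>u v \<psi>. sat M (asg u v) \<psi> = sat M (asg d d) \<psi>"
    by metis
  then have "up L M a b \<union> up L M c d \<subseteq> triv L M"
    unfolding up_def triv_def up2_def by blast
  then show ?thesis
    unfolding arrow_models_def by blast
next
  case True
  then obtain z where "z \<noteq> d" by blast
  have \<phi>_up2: "\<phi> \<in> up2 L M a b c d"
    using assms unfolding up2_def up_def by blast
  have "\<phi> \<notin> triv L M"
  proof
    assume "\<phi> \<in> triv L M"
    then have "sat M (asg c z) \<phi>"
      unfolding triv_def up2_def up_def by blast
    with determines \<open>z \<noteq> d\<close> show False by blast
  qed
  moreover have "up2 L M a b c d' = up2 L M a b c d"
    if "up2 L M a b c d \<subseteq> up2 L M a b c d'" for d'
  proof -
    have "sat M (asg c d') \<phi>"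
      using that \<phi>_up2 unfolding up2_def up_def by blast
    then show ?thesis using determines by simp
  qed
  ultimately show ?thesis
    using \<phi>_up2 unfolding arrow_models_def by auto
qed

lemma arrow_models_if_cterm_determines_last:
  assumes "cterm L t" and "tfun M t a b = tfun M t c d"
    and "\<And>d'. d' \<noteq> d \<Longrightarrow> tfun M t a b \<noteq> tfun M t c d'"
  shows "arrow_models L M a b c d"
proof (rule arrow_models_if_cformula_determines_last)
  show "cformula L (Eq t (Par (tfun M t a b)))"
    using assms(1) by (intro cformula_Eq_Par) (auto simp: cterm_def)
qed (use assms in \<open>auto simp: tfun_def, metis\<close>)

theorem theorem10:
  fixes L :: "('f, 'r) lang" and M :: "('f, 'r, 'a) struc" and a b c d :: 'a
  shows "(\<forall>t. cterm L t \<and> tfun M t a b = tfun M t c d \<and>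
              (\<forall>d'. d' \<noteq> d \<longrightarrow> tfun M t a b \<noteq> tfun M t c d')
            \<longrightarrow> arrow_models L M a b c d)
       \<and> (\<forall>ta tb tc td.
            cterm L ta \<and> cterm L tb \<and> cterm L tc \<and> cterm L td \<and>
            tfun M ta a b = tfun M ta c d \<and> (\<forall>a'. a' \<noteq> a \<longrightarrow> tfun M ta a' b \<noteq> tfun M ta c d) \<and>
            tfun M tb a b = tfun M tb c d \<and> (\<forall>b'. b' \<noteq> b \<longrightarrow> tfun M tb a b' \<noteq> tfun M tb c d) \<and>
            tfun M tc a b = tfun M tc c d \<and> (\<forall>c'. c' \<noteq> c \<longrightarrow> tfun M tc a b \<noteq> tfun M tc c' d) \<and>
            tfun M td a b = tfun M td c d \<and> (\<forall>d'. d' \<noteq> d \<longrightarrow> tfun M td a b \<noteq> tfun M td c d')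
            \<longrightarrow> analogy L M a b c d)"
proof (intro conjI allI impI; elim conjE)
  fix t
  assume "cterm L t" "tfun M t a b = tfun M t c d"
    "\<forall>d'. d' \<noteq> d \<longrightarrow> tfun M t a b \<noteq> tfun M t c d'"
  then show "arrow_models L M a b c d"
    by (intro arrow_models_if_cterm_determines_last) auto
next
  fix ta tb tc td
  assume ta: "cterm L ta" "tfun M ta a b = tfun M ta c d"
      "\<forall>a'. a' \<noteq> a \<longrightarrow> tfun M ta a' b \<noteq> tfun M ta c d"
    and tb: "cterm L tb" "tfun M tb a b = tfun M tb c d"
      "\<forall>b'. b' \<noteq> b \<longrightarrow> tfun M tb a b' \<noteq> tfun M tb c d"
    and tc: "cterm L tc" "tfun M tc a b = tfun M tc c d"
      "\<forall>c'. c' \<noteq> c \<longrightarrow> tfun M tc a b \<noteq> tfun M tc c' d"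
    and td: "cterm L td" "tfun M td a b = tfun M td c d"
      "\<forall>d'. d' \<noteq> d \<longrightarrow> tfun M td a b \<noteq> tfun M td c d'"
  have "arrow_models L M a b c d"
    using td by (intro arrow_models_if_cterm_determines_last[of L td]) auto
  moreover have "arrow_models L M b a d c"
    using tc by (intro arrow_models_if_cterm_determines_last[of L "swap_xy tc"])
      (auto simp: tfun_swap_xy cterm_swap_xy)
  moreover have "arrow_models L M c d a b"
    using tb by (intro arrow_models_if_cterm_determines_last[of L tb]) auto
  moreover have "arrow_models L M d c b a"
    using ta by (intro arrow_models_if_cterm_determines_last[of L "swap_xy ta"])
      (auto simp: tfun_swap_xy cterm_swap_xy)
  ultimately show "analogy L M a b c d"
    by (simp add: analogy_def)
qed

end
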